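(* If $\iota\in\mathbb C$ satisfies $\iota^4=1$, then the balanced Chekhov–Fock algebra $\mathcal Z^\iota(\lambda)$ is commutative.
   Context: $S$ is a closed oriented surface $\bar S$ of genus $g$ minus $s\ge1$ points, $2-2g-s<0$; $\lambda$ is an ideal triangulation (triangulation of $\bar S$ with vertices exactly the removed points) with edges $\lambda_1,\dots,\lambda_n$. Let $a_{ij}\in\{0,1,2\}$ be the number of times an end of $\lambda_j$ immediately succeeds an end of $\lambda_i$ going counterclockwise around a puncture, $\sigma_{ij}=a_{ij}-a_{ji}$. For $\iota\in\mathbb C-\{0\}$, $\mathcal T^\iota(\lambda)$ is the algebra generated by $Z_i^{\pm1}$ with relations $Z_iZ_j=\iota^{2\sigma_{ij}}Z_jZ_i$, and the balanced Chekhov–Fock algebra $\mathcal Z^\iota(\lambda)$ is its subalgebra generated by the monomials $Z_1^{k_1}\cdots Z_n^{k_n}$ such that $k_{i_1}+k_{i_2}+k_{i_3}$ is even whenever $\lambda_{i_1},\lambda_{i_2},\lambda_{i_3}$ are the sides of a face of $\lambda$. *)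

theory Defs
  imports Complex_Main
begin

text \<open>Combinatorial model of an ideal triangulation \<lambda> of a punctured oriented surface.
  Faces form a finite set F; for a face f, side f 0, side f 1, side f 2 are the labels
  (in {0..<n}, i.e. edges \<lambda>_1..\<lambda>_n re-indexed from 0) of its three sides, listed in
  counterclockwise order around the boundary of f.  Sides carrying the same label are glued
  (orientation-reversingly); each edge is a side of exactly two face-sides.  The vertices
  of the glued closed surface are the punctures.\<close>

definition face_sides :: "'f set \<Rightarrow> ('f \<Rightarrow> nat \<Rightarrow> nat) \<Rightarrow> nat \<Rightarrow> ('f \<times> nat) set" where
  "face_sides F side i = {(f, r). f \<in> F \<and> r < 3 \<and> side f r = i}"

definition face_adj :: "'f set \<Rightarrow> ('f \<Rightarrow> nat \<Rightarrow> nat) \<Rightarrow> ('f \<times> 'f) set" where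
  "face_adj F side = {(f, g). f \<in> F \<and> g \<in> F \<and> (\<exists>r<3. \<exists>r'<3. side f r = side g r')}"

definition ideal_triangulation :: "'f set \<Rightarrow> ('f \<Rightarrow> nat \<Rightarrow> nat) \<Rightarrow> nat \<Rightarrow> bool" where
  "ideal_triangulation F side n \<longleftrightarrow>
     finite F \<and> F \<noteq> {} \<and>
     (\<forall>f\<in>F. \<forall>r<3. side f r < n) \<and>
     (\<forall>i<n. card (face_sides F side i) = 2) \<and>
     (\<forall>f\<in>F. \<forall>g\<in>F. (f, g) \<in> (face_adj F side)\<^sup>*)"

text \<open>a i j = number of times an end of edge j immediately succeeds an end of edge i going
  counterclockwise around a puncture = number of face corners where this happens.  In a
  face with counterclockwise sides (s0,s1,s2), at the corner between s_r and s_(r+1),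
  turning counterclockwise one passes from s_(r+1) to s_r.\<close>

definition a_coeff :: "'f set \<Rightarrow> ('f \<Rightarrow> nat \<Rightarrow> nat) \<Rightarrow> nat \<Rightarrow> nat \<Rightarrow> int" where
  "a_coeff F side i j = int (card {(f, r). f \<in> F \<and> r < 3 \<and>
       side f ((r + 1) mod 3) = i \<and> side f r = j})"

definition sigma :: "'f set \<Rightarrow> ('f \<Rightarrow> nat \<Rightarrow> nat) \<Rightarrow> nat \<Rightarrow> nat \<Rightarrow> int" where
  "sigma F side i j = a_coeff F side i j - a_coeff F side j i"

text \<open>The Chekhov--Fock algebra T^\<iota>(\<lambda>), realised on its basis of ordered monomials
  Z^k = Z_1^{k_1} ... Z_n^{k_n}, k \<in> Z^n (exponent vectors nat \<Rightarrow> int vanishing off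
  {0..<n}).  An element is a finitely supported coefficient function.  The relations
  Z_i Z_j = \<iota>^(2 \<sigma>_ij) Z_j Z_i give
  Z^k Z^l = \<iota>^(2 \<Sum>_{j<i} \<sigma>_ij k_i l_j) Z^(k+l).\<close>

definition expvecs :: "nat \<Rightarrow> (nat \<Rightarrow> int) set" where
  "expvecs n = {k. \<forall>i\<ge>n. k i = 0}"

definition csupp :: "((nat \<Rightarrow> int) \<Rightarrow> complex) \<Rightarrow> (nat \<Rightarrow> int) set" where
  "csupp x = {k. x k \<noteq> 0}"

definition CF_algebra :: "nat \<Rightarrow> ((nat \<Rightarrow> int) \<Rightarrow> complex) set" where
  "CF_algebra n = {x. finite (csupp x) \<and> csupp x \<subseteq> expvecs n}"

definition mono_twist :: "complex \<Rightarrow> 'f set \<Rightarrow> ('f \<Rightarrow> nat \<Rightarrow> nat) \<Rightarrow> nat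
    \<Rightarrow> (nat \<Rightarrow> int) \<Rightarrow> (nat \<Rightarrow> int) \<Rightarrow> complex" where
  "mono_twist \<iota> F side n k l =
     \<iota> powi (2 * (\<Sum>i<n. \<Sum>j<i. sigma F side i j * k i * l j))"

definition CF_mult :: "complex \<Rightarrow> 'f set \<Rightarrow> ('f \<Rightarrow> nat \<Rightarrow> nat) \<Rightarrow> nat
    \<Rightarrow> ((nat \<Rightarrow> int) \<Rightarrow> complex) \<Rightarrow> ((nat \<Rightarrow> int) \<Rightarrow> complex) \<Rightarrow> ((nat \<Rightarrow> int) \<Rightarrow> complex)" where
  "CF_mult \<iota> F side n x y = (\<lambda>m. \<Sum>k\<in>csupp x. \<Sum>l\<in>csupp y.
      if (\<lambda>i. k i + l i) = m then x k * y l * mono_twist \<iota> F side n k l else 0)"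

definition balanced_exp :: "'f set \<Rightarrow> ('f \<Rightarrow> nat \<Rightarrow> nat) \<Rightarrow> nat \<Rightarrow> (nat \<Rightarrow> int) set" where
  "balanced_exp F side n = {k. k \<in> expvecs n \<and>
      (\<forall>f\<in>F. even (k (side f 0) + k (side f 1) + k (side f 2)))}"

definition balanced_CF :: "'f set \<Rightarrow> ('f \<Rightarrow> nat \<Rightarrow> nat) \<Rightarrow> nat \<Rightarrow> ((nat \<Rightarrow> int) \<Rightarrow> complex) set" where
  "balanced_CF F side n = {x. finite (csupp x) \<and> csupp x \<subseteq> balanced_exp F side n}"

end

theory Submission imports Defs begin

text \<open>Commuting two monomials Z^k and Z^l of the Chekhov--Fock algebra costs the factor
  \<iota>^(2 W(k,l)), where W(k,l) = \<Sum>_{i,j} \<sigma>_ij k_i l_j.  Since a_ij counts face corners,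
  W(k,l) is a sum over faces of cyclic expressions in the exponents of the three sides;
  modulo 2 each of these equals (k_0+k_1+k_2)(l_0+l_1+l_2) - \<Sum>_r k_r l_r.  For balanced k
  the first term is even, and the diagonal terms sum to 2 \<Sum>_i k_i l_i because every edge
  is a side of exactly two faces.  Hence W(k,l) is even and \<iota>^(2 W(k,l)) = 1 when \<iota>^4 = 1.\<close>

lemma sum_by_fibres:
  fixes h :: "'b \<Rightarrow> 'c::comm_semiring_1"
  assumes "finite C" "finite T" "g ` C \<subseteq> T"
  shows "(\<Sum>c\<in>C. h (g c)) = (\<Sum>t\<in>T. of_nat (card {c\<in>C. g c = t}) * h t)"
proof -
  have "(\<Sum>c\<in>C. h (g c)) = (\<Sum>t\<in>T. \<Sum>c\<in>{c\<in>C. g c = t}. h (g c))"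
    using sum.group[OF assms, of "\<lambda>c. h (g c)"] by simp
  also have "\<dots> = (\<Sum>t\<in>T. of_nat (card {c\<in>C. g c = t}) * h t)"
    by (intro sum.cong refl) simp
  finally show ?thesis .
qed

lemma sum_lower_triangle_antisym:
  fixes s :: "nat \<Rightarrow> nat \<Rightarrow> 'a::comm_ring"
  assumes "\<And>i j. s j i = - s i j" and "\<And>i. s i i = 0"
  shows "(\<Sum>i<n. \<Sum>j<i. s i j * k i * l j) - (\<Sum>i<n. \<Sum>j<i. s i j * l i * k j)
       = (\<Sum>i<n. \<Sum>j<n. s i j * k i * l j)"
proof (induction n)
  case (Suc n)
  have col: "(\<Sum>i<n. s i n * k i * l n) = - (\<Sum>j<n. s n j * l n * k j)"
    by (simp add: assms(1)[of n] sum_negf mult_ac)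
  have "(\<Sum>i<Suc n. \<Sum>j<Suc n. s i j * k i * l j)
      = (\<Sum>i<n. \<Sum>j<n. s i j * k i * l j) + (\<Sum>i<n. s i n * k i * l n)
        + (\<Sum>j<n. s n j * k n * l j)"
    by (simp add: assms(2) sum.distrib)
  then show ?case
    by (simp add: Suc.IH[symmetric] col)
qed simp

lemma sum_lessThan_3: "(\<Sum>r<(3::nat). h r) = h 0 + h 1 + (h 2 :: 'a::comm_monoid_add)"
  by (simp add: eval_nat_numeral add.assoc)

lemma cyclic_face_form_eq:
  fixes k0 k1 k2 l0 l1 l2 :: "'a::comm_ring_1"
  shows "(k1*l0 - k0*l1) + (k2*l1 - k1*l2) + (k0*l2 - k2*l0) + (k0*l0 + k1*l1 + k2*l2)
       = (k0 + k1 + k2) * (l0 + l1 + l2) - 2 * (k0*l1 + k1*l2 + k2*l0)"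
  by (simp add: algebra_simps)

lemma power_int_double_eq_if_even_diff:
  fixes \<iota> :: "'a::division_ring"
  assumes "\<iota> ^ 4 = 1" "even (a - b)"
  shows "\<iota> powi (2 * a) = \<iota> powi (2 * b)"
proof -
  obtain m where "a - b = 2 * m" using assms(2) by (elim evenE)
  then have "2 * a = 2 * b + 4 * m" by simp
  moreover have "\<iota> \<noteq> 0" using assms(1) by auto
  ultimately have "\<iota> powi (2 * a) = \<iota> powi (2 * b) * (\<iota> ^ 4) powi m"
    by (simp add: power_int_add power_int_power)
  with assms(1) show ?thesis by simp
qed

definition corner_form ::
    "'f set \<Rightarrow> ('f \<Rightarrow> nat \<Rightarrow> nat) \<Rightarrow> (nat \<Rightarrow> int) \<Rightarrow> (nat \<Rightarrow> int) \<Rightarrow> int" where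
  "corner_form F side k l = (\<Sum>f\<in>F. \<Sum>r<3. k (side f ((r + 1) mod 3)) * l (side f r))"

lemma a_coeff_bilinear_eq_corner_form:
  assumes "finite F" "\<forall>f\<in>F. \<forall>r<3. side f r < n"
  shows "(\<Sum>i<n. \<Sum>j<n. a_coeff F side i j * k i * l j) = corner_form F side k l"
proof -
  define g where "g = (\<lambda>(f, r). (side f ((r + 1) mod 3), side f r))"
  have "corner_form F side k l = (\<Sum>c\<in>F \<times> {..<3}. (\<lambda>(i, j). k i * l j) (g c))"
    unfolding corner_form_def g_def by (simp add: sum.cartesian_product case_prod_beta)
  also have "\<dots> = (\<Sum>t\<in>{..<n} \<times> {..<n}.
      of_nat (card {c\<in>F \<times> {..<3}. g c = t}) * (\<lambda>(i, j). k i * l j) t)"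
    by (rule sum_by_fibres) (use assms in \<open>auto simp: g_def\<close>)
  also have "\<dots> = (\<Sum>(i, j)\<in>{..<n} \<times> {..<n}. a_coeff F side i j * k i * l j)"
  proof -
    have "\<And>i j. {c\<in>F \<times> {..<3}. g c = (i, j)}
        = {(f, r). f \<in> F \<and> r < 3 \<and> side f ((r + 1) mod 3) = i \<and> side f r = j}"
      by (auto simp: g_def)
    then show ?thesis
      by (intro sum.cong refl) (auto simp: a_coeff_def)
  qed
  also have "\<dots> = (\<Sum>i<n. \<Sum>j<n. a_coeff F side i j * k i * l j)"
    by (simp add: sum.cartesian_product)
  finally show ?thesis ..
qed

lemma sigma_bilinear_eq_corner_form:
  assumes "finite F" "\<forall>f\<in>F. \<forall>r<3. side f r < n"
  shows "(\<Sum>i<n. \<Sum>j<n. sigma F side i j * k i * l j)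
       = corner_form F side k l - corner_form F side l k"
proof -
  have "(\<Sum>i<n. \<Sum>j<n. a_coeff F side j i * k i * l j)
      = (\<Sum>j<n. \<Sum>i<n. a_coeff F side j i * l j * k i)"
    by (subst sum.swap) (simp add: mult_ac)
  then have "(\<Sum>i<n. \<Sum>j<n. a_coeff F side j i * k i * l j) = corner_form F side l k"
    using a_coeff_bilinear_eq_corner_form[OF assms] by simp
  with a_coeff_bilinear_eq_corner_form[OF assms] show ?thesis
    by (simp add: sigma_def left_diff_distrib sum_subtractf)
qed

lemma corner_diagonal_sum:
  fixes k l :: "nat \<Rightarrow> 'a::comm_semiring_1"
  assumes "ideal_triangulation F side n"
  shows "(\<Sum>f\<in>F. \<Sum>r<3. k (side f r) * l (side f r)) = 2 * (\<Sum>i<n. k i * l i)"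
proof -
  have fin: "finite F" and bnd: "\<forall>f\<in>F. \<forall>r<3. side f r < n"
    and two: "\<forall>i<n. card (face_sides F side i) = 2"
    using assms unfolding ideal_triangulation_def by auto
  have "(\<Sum>f\<in>F. \<Sum>r<3. k (side f r) * l (side f r))
      = (\<Sum>c\<in>F \<times> {..<3}. (\<lambda>i. k i * l i) (case_prod side c))"
    by (simp add: sum.cartesian_product case_prod_beta)
  also have "\<dots> = (\<Sum>i<n. of_nat (card {c\<in>F \<times> {..<3}. case_prod side c = i}) * (k i * l i))"
    by (rule sum_by_fibres) (use fin bnd in auto)
  also have "\<dots> = (\<Sum>i<n. 2 * (k i * l i))"
  proof (intro sum.cong refl)
    fix i assume "i \<in> {..<n}"
    moreover have "{c\<in>F \<times> {..<3}. case_prod side c = i} = face_sides F side i"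
      by (auto simp: face_sides_def)
    ultimately show "of_nat (card {c\<in>F \<times> {..<3}. case_prod side c = i}) * (k i * l i)
        = 2 * (k i * l i)"
      using two by simp
  qed
  finally show ?thesis by (simp add: sum_distrib_left)
qed

lemma even_sigma_bilinear:
  assumes tri: "ideal_triangulation F side n" and k: "k \<in> balanced_exp F side n"
  shows "even (\<Sum>i<n. \<Sum>j<n. sigma F side i j * k i * l j)"
proof -
  have fin: "finite F" and bnd: "\<forall>f\<in>F. \<forall>r<3. side f r < n"
    using tri unfolding ideal_triangulation_def by auto
  define face_term where "face_term f r =
    k (side f ((r + 1) mod 3)) * l (side f r) - l (side f ((r + 1) mod 3)) * k (side f r)
      + k (side f r) * l (side f r)" for f r
  have "even (\<Sum>r<3. face_term f r)" if "f \<in> F" for f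
  proof -
    have "even (k (side f 0) + k (side f 1) + k (side f 2))"
      using k that by (simp add: balanced_exp_def)
    moreover have "(\<Sum>r<3. face_term f r)
        = (k (side f 1) * l (side f 0) - k (side f 0) * l (side f 1))
          + (k (side f 2) * l (side f 1) - k (side f 1) * l (side f 2))
          + (k (side f 0) * l (side f 2) - k (side f 2) * l (side f 0))
          + (k (side f 0) * l (side f 0) + k (side f 1) * l (side f 1) + k (side f 2) * l (side f 2))"
      unfolding sum_lessThan_3 face_term_def by (simp add: mult.commute numeral_2_eq_2)
    ultimately show ?thesis
      unfolding cyclic_face_form_eq by simp
  qed
  then have "even (\<Sum>f\<in>F. \<Sum>r<3. face_term f r)"
    by (simp add: dvd_sum)
  moreover have "(\<Sum>f\<in>F. \<Sum>r<3. face_term f r)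
      = corner_form F side k l - corner_form F side l k + 2 * (\<Sum>i<n. k i * l i)"
    unfolding corner_form_def corner_diagonal_sum[OF tri, symmetric] face_term_def
    by (simp add: sum_subtractf sum.distrib)
  ultimately show ?thesis
    by (simp add: sigma_bilinear_eq_corner_form[OF fin bnd])
qed

lemma mono_twist_commute:
  assumes "ideal_triangulation F side n" "\<iota> ^ 4 = 1" "k \<in> balanced_exp F side n"
  shows "mono_twist \<iota> F side n k l = mono_twist \<iota> F side n l k"
proof -
  have "even ((\<Sum>i<n. \<Sum>j<i. sigma F side i j * k i * l j)
      - (\<Sum>i<n. \<Sum>j<i. sigma F side i j * l i * k j))"
    using even_sigma_bilinear[OF assms(1,3)]
    by (subst sum_lower_triangle_antisym) (simp_all add: sigma_def)
  then show ?thesis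
    unfolding mono_twist_def by (rule power_int_double_eq_if_even_diff[OF assms(2)])
qed

lemma CF_mult_commute:
  assumes "\<And>k l. k \<in> csupp x \<Longrightarrow> l \<in> csupp y
      \<Longrightarrow> mono_twist \<iota> F side n k l = mono_twist \<iota> F side n l k"
  shows "CF_mult \<iota> F side n x y = CF_mult \<iota> F side n y x"
proof
  fix m
  have "CF_mult \<iota> F side n y x m = (\<Sum>k\<in>csupp x. \<Sum>l\<in>csupp y.
      if (\<lambda>i. l i + k i) = m then y l * x k * mono_twist \<iota> F side n l k else 0)"
    unfolding CF_mult_def by (rule sum.swap)
  also have "\<dots> = CF_mult \<iota> F side n x y m"
    unfolding CF_mult_def
    by (intro sum.cong refl) (auto simp: add.commute mult.commute dest: assms)
  finally show "CF_mult \<iota> F side n x y m = CF_mult \<iota> F side n y x m" ..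
qed

theorem corollary3p3:
  fixes F :: "'f set" and side :: "'f \<Rightarrow> nat \<Rightarrow> nat" and n :: nat and \<iota> :: complex
  assumes "ideal_triangulation F side n"
    and "\<iota> ^ 4 = 1"
  shows "\<forall>x\<in>balanced_CF F side n. \<forall>y\<in>balanced_CF F side n.
           CF_mult \<iota> F side n x y = CF_mult \<iota> F side n y x"
proof (intro ballI CF_mult_commute)
  fix x k l
  assume "x \<in> balanced_CF F side n" "k \<in> csupp x"
  then have "k \<in> balanced_exp F side n"
    unfolding balanced_CF_def by blast
  then show "mono_twist \<iota> F side n k l = mono_twist \<iota> F side n l k"
    by (rule mono_twist_commute[OF assms])
qed

end
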